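(* Let $\nu,\mu\in\mathbb{N}$, let $h>0$ and $r\in\mathbb{N}$ with $r\geq 1$. Let $\mathbf{F}_x\in\mathbb{R}^{\nu\times\nu}$, $\mathbf{F}_y\in\mathbb{R}^{\nu\times\mu}$, $\mathbf{G}_x\in\mathbb{R}^{\mu\times\nu}$, $\mathbf{G}_y\in\mathbb{R}^{\mu\times\mu}$ be the Jacobian matrices $\partial\mathbf f/\partial\mathbf x$, $\partial\mathbf f/\partial\mathbf y$, $\partial\mathbf g/\partial\mathbf x$, $\partial\mathbf g/\partial\mathbf y$ evaluated at an equilibrium $(\mathbf x_o,\mathbf y_o)$ of the system $\mathbf x'=\mathbf f(\mathbf x,\mathbf y)$, $\mathbf 0=\mathbf g(\mathbf x,\mathbf y)$. Suppose vectors $\tilde{\mathbf x}_n,\tilde{\mathbf x}_{n+1},\tilde{\boldsymbol\xi}^{(0)}_{n+1},\dots,\tilde{\boldsymbol\xi}^{(r)}_{n+1}\in\mathbb{R}^{\nu}$ and $\tilde{\mathbf y}_n,\tilde{\mathbf y}_{n+1},\tilde{\mathbf y}_{\rm int}\in\mathbb{R}^{\mu}$ satisfy the linearized Heun predictor-corrector equations $$\tilde{\boldsymbol\xi}^{(0)}_{n+1}=\tilde{\mathbf x}_n+h(\mathbf F_x\tilde{\mathbf x}_n+\mathbf F_y\tilde{\mathbf y}_n),$$ $$\tilde{\boldsymbol\xi}^{(i)}_{n+1}=\tilde{\mathbf x}_n+\tfrac{h}{2}\big[\mathbf F_x\tilde{\mathbf x}_n+\mathbf F_x\tilde{\boldsymbol\xi}^{(i-1)}_{n+1}+\mathbf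 F_y(\tilde{\mathbf y}_n+\tilde{\mathbf y}_{\rm int})\big],\quad i=1,\dots,r,$$ $$\tilde{\mathbf x}_{n+1}=\tilde{\boldsymbol\xi}^{(r)}_{n+1},\qquad \mathbf 0=\mathbf G_x\tilde{\mathbf x}_{n+1}+\mathbf G_y\tilde{\mathbf y}_{n+1}.$$ For $m\in\mathbb{N}$ define $\mathbf C_m=\sum_{j=0}^{m}\big(\tfrac{h}{2}\mathbf F_x\big)^j$ (so $\mathbf C_0=\mathbf I$). Then $$\begin{bmatrix}\mathbf I&\mathbf 0\\ \mathbf G_x&\mathbf G_y\end{bmatrix}\begin{bmatrix}\tilde{\mathbf x}_{n+1}\\ \tilde{\mathbf y}_{n+1}\end{bmatrix}=\begin{bmatrix}\mathbf I+h\mathbf C_r\mathbf F_x & \big(h\mathbf C_r-\tfrac{h}{2}\mathbf C_{r-1}\big)\mathbf F_y\\ \mathbf 0&\mathbf 0\end{bmatrix}\begin{bmatrix}\tilde{\mathbf x}_n\\ \tilde{\mathbf y}_n\end{bmatrix}+\begin{bmatrix}\tfrac{h}{2}\mathbf C_{r-1}\mathbf F_y\tilde{\mathbf y}_{\rm int}\\ \mathbf 0\end{bmatrix}.$$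
   Context: Setting: a power system model is a differential-algebraic system $\mathbf x'(t)=\mathbf f(\mathbf x(t),\mathbf y(t))$, $\mathbf 0=\mathbf g(\mathbf x(t),\mathbf y(t))$ with states $\mathbf x\in\mathbb{R}^\nu$, algebraic variables $\mathbf y\in\mathbb{R}^\mu$, and $\mathbf f,\mathbf g$ differentiable; $(\mathbf x_o,\mathbf y_o)$ is an equilibrium ($\mathbf f(\mathbf x_o,\mathbf y_o)=\mathbf 0$, $\mathbf g(\mathbf x_o,\mathbf y_o)=\mathbf 0$). Heun's method in the partitioned-solution approach with time step $h$ and $r$ corrector steps computes $\boldsymbol\xi^{(0)}_{n+1}=\mathbf x_n+h\mathbf f(\mathbf x_n,\mathbf y_n)$, $\boldsymbol\xi^{(i)}_{n+1}=\mathbf x_n+0.5h\,\mathbf f(\mathbf x_n,\mathbf y_n)+0.5h\,\mathbf f(\boldsymbol\xi^{(i-1)}_{n+1},\mathbf y_{\rm int})$, $\mathbf x_{n+1}=\boldsymbol\xi^{(r)}_{n+1}$, $\mathbf 0=h\,\mathbf g(\mathbf x_{n+1},\mathbf y_{n+1})$, where $\mathbf y_{\rm int}$ is a known value substituted for the not-yet-computed $\mathbf y_{n+1}$ (the "interface" value). Tildes denote deviations from the equilibrium ($\tilde{\mathbf x}_n=\mathbf x_n-\mathbf x_o$, etc.); the displayed equations in the claim are the linearization of this scheme at $(\mathbf x_o,\mathbf y_o)$. $\mathbf I$ is the identity and $\mathbf 0$ the zero matrix of appropriate dimensions. *)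

theory Defs
  imports "HOL-Analysis.Analysis"
begin

text \<open>Matrix power with respect to the matrix product (the ring operations on
  real^'n^'n are componentwise, so we define it explicitly).\<close>
fun matpow :: "real^'n^'n \<Rightarrow> nat \<Rightarrow> real^'n^'n" where
  "matpow A 0 = mat 1"
| "matpow A (Suc k) = A ** matpow A k"

definition Cmat :: "real \<Rightarrow> real^'n^'n \<Rightarrow> nat \<Rightarrow> real^'n^'n" where
  "Cmat h Fx m = (\<Sum>j = 0..m. matpow ((h/2) *\<^sub>R Fx) j)"

definition block_mat ::
  "real^'n^'n \<Rightarrow> real^'m^'n \<Rightarrow> real^'n^'m \<Rightarrow> real^'m^'m \<Rightarrow> real^('n + 'm)^('n + 'm)" where
  "block_mat A B C D = (\<chi> i j. (case i of
       Inl a \<Rightarrow> (case j of Inl b \<Rightarrow> A $ a $ b | Inr b \<Rightarrow> B $ a $ b)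
     | Inr a \<Rightarrow> (case j of Inl b \<Rightarrow> C $ a $ b | Inr b \<Rightarrow> D $ a $ b)))"

definition block_vec :: "real^'n \<Rightarrow> real^'m \<Rightarrow> real^('n + 'm)" where
  "block_vec x y = (\<chi> i. (case i of Inl a \<Rightarrow> x $ a | Inr b \<Rightarrow> y $ b))"

end

theory Submission
  imports Defs
begin

text \<open>The corrector is the affine map \<open>\<xi> \<mapsto> b + M \<xi>\<close> with \<open>M = (h/2) Fx\<close>, so after
  \<open>r\<close> sweeps \<open>\<xi>(r) = C(r-1) b + M^r \<xi>(0)\<close>: a truncated geometric series applied to \<open>b\<close>.
  Inserting the predictor and using \<open>C(r) = C(r-1) + M^r = I + C(r-1) M\<close> collects the
  coefficients of \<open>x\<^sub>n\<close>, \<open>y\<^sub>n\<close> and \<open>y\<^sub>i\<^sub>n\<^sub>t\<close> into the stated blocks, and the algebraic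
  constraint makes the second block row vanish.\<close>

lemma matrix_add_rdistrib: "(A + B) ** C = A ** C + B ** C"
  by (vector matrix_matrix_mult_def sum.distrib distrib_right)

lemma matpow_Suc_right: "matpow A (Suc k) = matpow A k ** A"
  by (induction k) (simp_all add: matrix_mul_assoc)

lemma matrix_vector_mult_sum_left:
  "(\<Sum>j\<in>S. f j) *v x = (\<Sum>j\<in>S. f j *v x)"
  by (induction S rule: infinite_finite_induct) (simp_all add: matrix_vector_mult_add_rdistrib)

lemma matrix_vector_mult_sum_right:
  "A *v (\<Sum>j\<in>S. f j) = (\<Sum>j\<in>S. A *v f j)"
  by (induction S rule: infinite_finite_induct) (simp_all add: matrix_vector_right_distrib)

lemma affine_recurrence_closed_form:
  assumes "\<And>i. i < n \<Longrightarrow> x (Suc i) = b + A *v x i"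
  shows "x n = (\<Sum>j<n. matpow A j) *v b + matpow A n *v x 0"
  using assms
proof (induction n)
  case 0
  then show ?case by simp
next
  case (Suc n)
  then show ?case
    by (simp add: sum.lessThan_Suc_shift matrix_vector_mult_sum_left matrix_vector_mult_sum_right
        matrix_vector_right_distrib matrix_vector_mult_add_rdistrib matrix_vector_mul_assoc
        del: sum.lessThan_Suc)
qed

lemma Cmat_Suc: "Cmat h Fx (Suc k) = Cmat h Fx k + matpow ((h/2) *\<^sub>R Fx) (Suc k)"
  by (simp add: Cmat_def)

lemma Cmat_Suc_right: "Cmat h Fx (Suc k) = mat 1 + Cmat h Fx k ** ((h/2) *\<^sub>R Fx)"
proof (induction k)
  case 0
  then show ?case by (simp add: Cmat_def)
next
  case (Suc k)
  let ?M = "(h/2) *\<^sub>R Fx"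
  have "Cmat h Fx (Suc (Suc k)) = mat 1 + Cmat h Fx k ** ?M + matpow ?M (Suc k) ** ?M"
    by (simp only: Cmat_Suc[of h Fx "Suc k"] Suc.IH matpow_Suc_right[of ?M "Suc k"])
  also have "\<dots> = mat 1 + Cmat h Fx (Suc k) ** ?M"
    by (simp only: Cmat_Suc[of h Fx k] matrix_add_rdistrib add.assoc)
  finally show ?case .
qed

lemma heun_corrector_closed_form:
  assumes "r \<ge> 1"
    and predictor: "xi 0 = xn + h *\<^sub>R (Fx *v xn + Fy *v yn)"
    and corrector: "\<forall>i \<in> {1..r}. xi i = xn + (h/2) *\<^sub>R (Fx *v xn + Fx *v xi (i - 1) + Fy *v (yn + yint))"
  shows "xi r = (mat 1 + h *\<^sub>R (Cmat h Fx r ** Fx)) *v xn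
           + ((h *\<^sub>R Cmat h Fx r - (h/2) *\<^sub>R Cmat h Fx (r - 1)) ** Fy) *v yn
           + (h/2) *\<^sub>R (Cmat h Fx (r - 1) ** Fy) *v yint"
proof -
  obtain k where r: "r = Suc k"
    using \<open>r \<ge> 1\<close> by (cases r) auto
  define M where "M = (h/2) *\<^sub>R Fx"
  define b where "b = xn + (h/2) *\<^sub>R (Fx *v xn + Fy *v (yn + yint))"
  define C where "C = Cmat h Fx k"
  define P where "P = matpow M r"
  have step: "xi (Suc i) = b + M *v xi i" if "i < r" for i
  proof -
    have "xi (Suc i) = xn + (h/2) *\<^sub>R (Fx *v xn + Fx *v xi i + Fy *v (yn + yint))"
      using corrector that by auto
    then show ?thesis
      by (simp add: b_def M_def scaleR_matrix_vector_assoc[symmetric] algebra_simps)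
  qed
  have "(\<Sum>j<r. matpow M j) = C"
    unfolding C_def Cmat_def M_def r lessThan_Suc_atMost atLeast0AtMost ..
  then have xi_r: "xi r = C *v b + P *v xi 0"
    using affine_recurrence_closed_form[of r xi b M] step by (simp add: P_def)
  have C_r: "Cmat h Fx r = C + P"
    by (simp only: C_def P_def M_def r Cmat_Suc)
  have "C + P = mat 1 + C ** M"
    using C_r Cmat_Suc_right[of h Fx k] by (simp add: C_def M_def r)
  then have "C *v xn + P *v xn = xn + (h/2) *\<^sub>R (C *v (Fx *v xn))"
    by (metis M_def matrix_vector_mult_add_rdistrib matrix_vector_mul_lid matrix_vector_mul_assoc
        scaleR_matrix_vector_assoc matrix_vector_mult_scaleR)
  then have C_xn: "C *v xn = xn + (h/2) *\<^sub>R (C *v (Fx *v xn)) - P *v xn"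
    by (simp add: eq_diff_eq)
  have C_r1: "Cmat h Fx (r - 1) = C"
    by (simp add: C_def r)
  show ?thesis
    unfolding xi_r C_r C_r1 b_def predictor
    \<comment> \<open>componentwise, since on vectors \<open>v + v\<close> normalises to \<open>2 * v\<close> instead of \<open>2 *\<^sub>R v\<close>\<close>
    by (simp add: C_xn algebra_simps matrix_vector_mul_assoc[symmetric]
        scaleR_matrix_vector_assoc[symmetric] matrix_add_rdistrib vec_eq_iff)
qed

lemma sum_UNIV_Plus: "(\<Sum>i\<in>UNIV. f i) = (\<Sum>a\<in>UNIV. f (Inl a)) + (\<Sum>b\<in>UNIV. f (Inr b))"
  for f :: "'a::finite + 'b::finite \<Rightarrow> 'c::comm_monoid_add"
  using sum.Plus[of UNIV UNIV f] by (simp add: comp_def)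

lemma block_mat_mult_block_vec:
  "block_mat A B C D *v block_vec x y = block_vec (A *v x + B *v y) (C *v x + D *v y)"
  by (simp add: vec_eq_iff block_mat_def block_vec_def matrix_vector_mult_def sum_UNIV_Plus split: sum.split)

lemma block_vec_add: "block_vec x y + block_vec x' y' = block_vec (x + x') (y + y')"
  by (simp add: vec_eq_iff block_vec_def split: sum.split)

theorem mainTheorem1:
  fixes Fx :: "real^'nu^'nu" and Fy :: "real^'mu^'nu"
    and Gx :: "real^'nu^'mu" and Gy :: "real^'mu^'mu"
    and h :: real and r :: nat
    and xn xn1 :: "real^'nu" and xi :: "nat \<Rightarrow> real^'nu"
    and yn yn1 yint :: "real^'mu"
  assumes "h > 0" and "r \<ge> 1"
    and "xi 0 = xn + h *\<^sub>R (Fx *v xn + Fy *v yn)"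
    and "\<forall>i \<in> {1..r}. xi i = xn + (h/2) *\<^sub>R (Fx *v xn + Fx *v xi (i - 1) + Fy *v (yn + yint))"
    and "xn1 = xi r"
    and "0 = Gx *v xn1 + Gy *v yn1"
  shows "block_mat (mat 1) 0 Gx Gy *v block_vec xn1 yn1 =
         block_mat (mat 1 + h *\<^sub>R (Cmat h Fx r ** Fx))
                   ((h *\<^sub>R Cmat h Fx r - (h/2) *\<^sub>R Cmat h Fx (r - 1)) ** Fy)
                   0 0 *v block_vec xn yn
         + block_vec ((h/2) *\<^sub>R (Cmat h Fx (r - 1) ** Fy) *v yint) 0"
proof -
  have "xn1 = (mat 1 + h *\<^sub>R (Cmat h Fx r ** Fx)) *v xn
           + ((h *\<^sub>R Cmat h Fx r - (h/2) *\<^sub>R Cmat h Fx (r - 1)) ** Fy) *v yn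
           + (h/2) *\<^sub>R (Cmat h Fx (r - 1) ** Fy) *v yint"
    using heun_corrector_closed_form[OF assms(2-4)] assms(5) by simp
  then show ?thesis
    using assms(6) by (simp add: block_mat_mult_block_vec block_vec_add)
qed

end
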